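(* Let $P(s),C(s)$ be $n\times n$ real rational proper transfer function matrices with no poles in the closed right half-plane, such that the feedback system of $P$ and $C$ is well-posed. If $$\theta(P(j\omega))+\theta(C(j\omega))<\pi\quad\text{for all }\omega\in[-\infty,\infty],$$ then the feedback system is stable, i.e., $(I+C(s)P(s))^{-1}$ is proper with no poles in the closed right half-plane.
   Context: For a nonzero $A\in\mathbb{C}^{n\times n}$, the matrix singular angle $\theta(A)\in[0,\pi]$ is defined by $\cos\theta(A)=\inf\{\mathrm{Re}(x^*Ax)/(|x|\,|Ax|):0\ne x\in\mathbb{C}^n,\ Ax\ne0\}$; the frequency-wise singular angle is $\theta(P(j\omega))$ if $P(j\omega)\ne0$ and $0$ if $P(j\omega)=0$, where $P(j\pm\infty)=\lim_{\omega\to\pm\infty}P(j\omega)$. The feedback system of $P,C$ (with $u_1=e_1-y_2$, $u_2=e_2+y_1$, $y_1=Pu_1$, $y_2=Cu_2$) is well-posed if $(I+C(s)P(s))^{-1}$ exists and is proper, and (for such stable $P,C$) stable if and only if $(I+C(s)P(s))^{-1}$ is proper with no poles in the closed right half-plane. *)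

theory Defs
  imports "HOL-Analysis.Analysis" "HOL-Computational_Algebra.Polynomial"
begin

definition rat_fun :: "real poly \<Rightarrow> real poly \<Rightarrow> complex \<Rightarrow> complex" where
  "rat_fun p q s = poly (map_poly complex_of_real p) s / poly (map_poly complex_of_real q) s"

definition real_rational_proper :: "(complex \<Rightarrow> complex^'n^'n) \<Rightarrow> bool" where
  "real_rational_proper G \<longleftrightarrow>
     (\<forall>i j. \<exists>p q. q \<noteq> 0 \<and> degree p \<le> degree q \<and> (\<forall>s. G s $ i $ j = rat_fun p q s))"

definition real_rational_proper_stable :: "(complex \<Rightarrow> complex^'n^'n) \<Rightarrow> bool" where
  "real_rational_proper_stable G \<longleftrightarrow>
     (\<forall>i j. \<exists>p q. q \<noteq> 0 \<and> degree p \<le> degree q \<and>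
        (\<forall>s. Re s \<ge> 0 \<longrightarrow> poly (map_poly complex_of_real q) s \<noteq> 0) \<and>
        (\<forall>s. G s $ i $ j = rat_fun p q s))"

text \<open>M is the inverse of the rational matrix I + C P (equality of rational
  matrices, i.e. pointwise identity away from finitely many points).\<close>
definition is_inverse_IpCP ::
  "(complex \<Rightarrow> complex^'n^'n) \<Rightarrow> (complex \<Rightarrow> complex^'n^'n) \<Rightarrow> (complex \<Rightarrow> complex^'n^'n) \<Rightarrow> bool" where
  "is_inverse_IpCP M P C \<longleftrightarrow> finite {s. M s ** (mat 1 + C s ** P s) \<noteq> mat 1}"

definition well_posed :: "(complex \<Rightarrow> complex^'n^'n) \<Rightarrow> (complex \<Rightarrow> complex^'n^'n) \<Rightarrow> bool" where
  "well_posed P C \<longleftrightarrow> (\<exists>M. real_rational_proper M \<and> is_inverse_IpCP M P C)"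

definition feedback_stable :: "(complex \<Rightarrow> complex^'n^'n) \<Rightarrow> (complex \<Rightarrow> complex^'n^'n) \<Rightarrow> bool" where
  "feedback_stable P C \<longleftrightarrow> (\<exists>M. real_rational_proper_stable M \<and> is_inverse_IpCP M P C)"

definition cinner :: "complex^'n \<Rightarrow> complex^'n \<Rightarrow> complex" where
  "cinner x y = (\<Sum>i\<in>UNIV. cnj (x $ i) * y $ i)"

definition sing_angle :: "complex^'n^'n \<Rightarrow> real" where
  "sing_angle A = arccos (Inf {Re (cinner x (A *v x)) / (norm x * norm (A *v x)) | x.
                                  x \<noteq> 0 \<and> A *v x \<noteq> 0})"

definition freq_angle :: "complex^'n^'n \<Rightarrow> real" where
  "freq_angle A = (if A = 0 then 0 else sing_angle A)"

definition val_inf :: "(complex \<Rightarrow> complex^'n^'n) \<Rightarrow> complex^'n^'n" where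
  "val_inf G = Lim at_top (\<lambda>w::real. G (\<i> * of_real w))"

definition val_minf :: "(complex \<Rightarrow> complex^'n^'n) \<Rightarrow> complex^'n^'n" where
  "val_minf G = Lim at_bot (\<lambda>w::real. G (\<i> * of_real w))"

end

theory Submission
  imports Defs "HOL-Complex_Analysis.Complex_Analysis"
    "HOL-Computational_Algebra.Polynomial_Factorial" "HOL-Computational_Algebra.Field_as_Ring"
begin

(* Let F t s = det (I + t C(s) P(s)) for t in [0, 1]. If theta(A) + theta(B) < pi, then I + t BA is
   nonsingular for every t >= 0: for a kernel vector v and u = Av we get Bu = -v/t, so the angle
   between v and Av and the angle between u and Bu add up to exactly pi. Hence no F t vanishes on
   the imaginary axis or near infinity. Since F 0 = 1, Hurwitz's theorem and the connectedness of
   [0, 1] show that no zero of F t can enter the right half-plane, so det (I + CP) has no zeros in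
   Re s >= 0. Finally, by Cramer's rule each entry of the proper rational inverse of I + CP,
   written in lowest terms, is a cofactor divided by det (I + CP), so its denominator cannot
   vanish where det (I + CP) does not. *)

no_notation fps_nth (infixl \<open>$\<close> 75)

section \<open>Polynomials and rational functions\<close>

abbreviation cpoly :: "real poly \<Rightarrow> complex poly" where
  "cpoly p \<equiv> map_poly complex_of_real p"

lemma cpoly_add: "cpoly (p + q) = cpoly p + cpoly q"
  by (rule poly_eqI) (simp add: coeff_map_poly)

lemma poly_cpoly_mult: "poly (cpoly (p * q)) s = poly (cpoly p) s * poly (cpoly q) s"
  by (induct p) (auto simp: map_poly_pCons cpoly_add map_poly_smult algebra_simps)

lemma cpoly_eq_0_iff: "cpoly p = 0 \<longleftrightarrow> p = 0"
  by (rule map_poly_eq_0_iff) auto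

lemma degree_cpoly: "degree (cpoly p) = degree p"
  by (rule degree_map_poly) auto

lemma rat_fun_tendsto_at_infinity:
  assumes "q \<noteq> 0" "degree p \<le> degree q"
  shows "(rat_fun p q \<longlongrightarrow> of_real (coeff p (degree q) / lead_coeff q)) at_infinity"
proof (cases "degree p = degree q")
  case True
  let ?d = "degree q"
  have "((\<lambda>s. poly (cpoly p) s / s ^ ?d) \<longlongrightarrow> of_real (coeff p ?d)) at_infinity"
    using poly_divide_tendsto_aux[of "cpoly p"] True by (simp add: degree_cpoly coeff_map_poly)
  moreover have "((\<lambda>s. poly (cpoly q) s / s ^ ?d) \<longlongrightarrow> of_real (lead_coeff q)) at_infinity"
    using poly_divide_tendsto_aux[of "cpoly q"] by (simp add: degree_cpoly coeff_map_poly)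
  ultimately have "((\<lambda>s. (poly (cpoly p) s / s ^ ?d) / (poly (cpoly q) s / s ^ ?d))
      \<longlongrightarrow> of_real (coeff p ?d) / of_real (lead_coeff q)) at_infinity"
    using assms(1) by (intro tendsto_divide) auto
  moreover have "\<forall>\<^sub>F s in at_infinity.
      (poly (cpoly p) s / s ^ ?d) / (poly (cpoly q) s / s ^ ?d) = rat_fun p q s"
  proof (rule eventually_at_infinityI[of 1])
    fix s :: complex
    assume "1 \<le> norm s"
    then have "s ^ ?d \<noteq> 0" by auto
    then show "(poly (cpoly p) s / s ^ ?d) / (poly (cpoly q) s / s ^ ?d) = rat_fun p q s"
      by (simp add: rat_fun_def)
  qed
  ultimately have "(rat_fun p q \<longlongrightarrow> of_real (coeff p ?d) / of_real (lead_coeff q)) at_infinity"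
    by (rule Lim_transform_eventually)
  then show ?thesis by simp
next
  case False
  then have "degree (cpoly p) < degree (cpoly q)"
    using assms(2) by (simp add: degree_cpoly)
  then have "(rat_fun p q \<longlongrightarrow> 0) at_infinity"
    unfolding rat_fun_def[abs_def] by (rule poly_divide_tendsto_0_at_infinity)
  moreover have "coeff p (degree q) = 0"
    using \<open>degree (cpoly p) < degree (cpoly q)\<close> by (simp add: degree_cpoly coeff_eq_0)
  ultimately show ?thesis by simp
qed

lemma rat_fun_holomorphic: "rat_fun p q holomorphic_on {s. poly (cpoly q) s \<noteq> 0}"
  unfolding rat_fun_def by (intro holomorphic_intros poly_holomorphic_on) auto

lemma rat_fun_lowest_terms:
  assumes "q \<noteq> 0" "degree p \<le> degree q"
  obtains p' q' where "q' \<noteq> 0" "degree p' \<le> degree q'"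
    "\<And>s. poly (cpoly q') s = 0 \<Longrightarrow> poly (cpoly p') s \<noteq> 0"
    "\<And>s. poly (cpoly q) s \<noteq> 0 \<Longrightarrow> rat_fun p' q' s = rat_fun p q s"
proof -
  define g where "g = gcd p q"
  define p' where "p' = p div g"
  define q' where "q' = q div g"
  have "g \<noteq> 0" using assms(1) by (simp add: g_def)
  have p_eq: "p = g * p'" and q_eq: "q = g * q'" by (simp_all add: g_def p'_def q'_def)
  then have "q' \<noteq> 0" using assms(1) by auto
  have "degree p' \<le> degree q'"
  proof (cases "p' = 0")
    case False
    then show ?thesis
      using assms(2) \<open>g \<noteq> 0\<close> \<open>q' \<noteq> 0\<close> by (simp add: p_eq q_eq degree_mult_eq)
  qed simp
  moreover have "poly (cpoly p') s \<noteq> 0" if "poly (cpoly q') s = 0" for s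
  proof -
    have "coprime p' q'"
      unfolding p'_def q'_def g_def using assms(1) by (intro div_gcd_coprime) auto
    then obtain a b where "a * p' + b * q' = 1"
      using bezout_coefficients_fst_snd by (metis coprime_imp_gcd_eq_1)
    then have "poly (cpoly a) s * poly (cpoly p') s + poly (cpoly b) s * poly (cpoly q') s = 1"
      by (metis cpoly_add poly_add poly_cpoly_mult map_poly_1' of_real_1 poly_1)
    with that show ?thesis by auto
  qed
  moreover have "rat_fun p' q' s = rat_fun p q s" if "poly (cpoly q) s \<noteq> 0" for s
  proof -
    have "poly (cpoly g) s \<noteq> 0" using that by (simp add: q_eq poly_cpoly_mult)
    then show ?thesis by (simp add: rat_fun_def p_eq q_eq poly_cpoly_mult)
  qed
  ultimately show ?thesis using that \<open>q' \<noteq> 0\<close> by blast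
qed

section \<open>Matrices and determinants\<close>

lemma tendsto_det:
  fixes A :: "'b \<Rightarrow> 'a::real_normed_field^'n^'n"
  assumes "\<And>i j. ((\<lambda>x. A x $ i $ j) \<longlongrightarrow> B $ i $ j) F"
  shows "((\<lambda>x. det (A x)) \<longlongrightarrow> det B) F"
  unfolding det_def by (intro tendsto_intros assms)

lemma continuous_on_det:
  fixes A :: "'b::topological_space \<Rightarrow> 'a::real_normed_field^'n^'n"
  assumes "\<And>i j. continuous_on S (\<lambda>x. A x $ i $ j)"
  shows "continuous_on S (\<lambda>x. det (A x))"
  unfolding det_def by (intro continuous_intros assms)

lemma holomorphic_on_det:
  fixes A :: "complex \<Rightarrow> complex^'n^'n"
  assumes "\<And>i j. (\<lambda>x. A x $ i $ j) holomorphic_on S"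
  shows "(\<lambda>x. det (A x)) holomorphic_on S"
  unfolding det_def by (intro holomorphic_intros assms)

lemma det_eq_0_imp_kernel:
  fixes M :: "'a::field^'n^'n"
  assumes "det M = 0"
  obtains v where "v \<noteq> 0" "M *v v = 0"
proof -
  have "\<not> inj ((*v) M)"
    using det_nz_iff_inj_gen[OF matrix_vector_mul_linear_gen, of M] assms by simp
  then obtain x y where "x \<noteq> y" "M *v x = M *v y" unfolding inj_def by blast
  then show ?thesis using that[of "x - y"] by (simp add: matrix_vector_mult_diff_distrib)
qed

lemma scaleR_matrix_vector_mult:
  fixes M :: "'a::real_algebra_1^'n^'m"
  shows "(c *\<^sub>R M) *v v = c *\<^sub>R (M *v v)"
  by (simp add: vec_eq_iff matrix_vector_mult_def scaleR_sum_right)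

lemma left_inverse_entry_mult_det:
  fixes A B :: "'a::field^'n^'n"
  assumes "B ** A = mat 1"
  shows "B $ k $ j * det A = det (\<chi> a b. if b = k then (if a = j then 1 else 0) else A $ a $ b)"
proof -
  have "A ** B = mat 1" using assms by (simp add: matrix_left_right_inverse)
  then have column_j: "(A *v column j B) $ a = (if a = j then 1 else 0)" for a
    by (simp add: matrix_vector_mult_def matrix_matrix_mult_def column_def vec_eq_iff mat_def)
  show ?thesis
    using cramer_lemma[where A = A and k = k and x = "column j B"] unfolding column_j
    by (simp add: column_def)
qed

lemma mat1_plus_product_entry:
  fixes A B :: "complex^'n^'n"
  shows "(mat 1 + B ** A) $ i $ j = (if i = j then 1 else 0) + (\<Sum>k\<in>UNIV. B $ i $ k * A $ k $ j)"
  by (simp add: matrix_matrix_mult_def mat_def)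

lemma mat1_plus_scaled_product_entry:
  fixes A B :: "complex^'n^'n"
  shows "(mat 1 + t *\<^sub>R (B ** A)) $ i $ j
           = (if i = j then 1 else 0) + of_real t * (\<Sum>k\<in>UNIV. B $ i $ k * A $ k $ j)"
  by (simp add: matrix_matrix_mult_def mat_def) (simp add: scaleR_conv_of_real)

lemma continuous_on_det_mat1_plus_scaled_product:
  fixes A B :: "complex \<Rightarrow> complex^'n^'n"
  assumes "\<And>i j. continuous_on U (\<lambda>s. A s $ i $ j)" "\<And>i j. continuous_on U (\<lambda>s. B s $ i $ j)"
  shows "continuous_on (T \<times> U) (\<lambda>(t, s). det (mat 1 + t *\<^sub>R (B s ** A s)))"
proof -
  have cont_A: "continuous_on (T \<times> U) (\<lambda>x. A (snd x) $ i $ j)" for i j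
    by (rule continuous_on_compose2[OF assms(1) continuous_on_snd]) auto
  have cont_B: "continuous_on (T \<times> U) (\<lambda>x. B (snd x) $ i $ j)" for i j
    by (rule continuous_on_compose2[OF assms(2) continuous_on_snd]) auto
  show ?thesis
    unfolding case_prod_beta'
    by (intro continuous_on_det, unfold mat1_plus_scaled_product_entry)
      (intro cont_A cont_B continuous_intros)
qed

lemma tendsto_det_mat1_plus_scaled_product:
  fixes A B :: "complex \<Rightarrow> complex^'n^'n"
  assumes "(t \<longlongrightarrow> t0) F" "filterlim s at_infinity F"
    and "\<And>i j. ((\<lambda>z. A z $ i $ j) \<longlongrightarrow> A0 $ i $ j) at_infinity"
    and "\<And>i j. ((\<lambda>z. B z $ i $ j) \<longlongrightarrow> B0 $ i $ j) at_infinity"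
  shows "((\<lambda>x. det (mat 1 + t x *\<^sub>R (B (s x) ** A (s x)))) \<longlongrightarrow> det (mat 1 + t0 *\<^sub>R (B0 ** A0))) F"
  by (intro tendsto_det, unfold mat1_plus_scaled_product_entry)
    (intro tendsto_intros assms(1) filterlim_compose[OF assms(3) assms(2)]
      filterlim_compose[OF assms(4) assms(2)])

section \<open>Singular angles\<close>

lemma Re_cinner: "Re (cinner x y) = inner x y"
  by (simp add: cinner_def inner_vec_def inner_complex_def)

lemma inner_div_norms_bounds:
  fixes x y :: "'a::real_inner"
  shows "-1 \<le> inner x y / (norm x * norm y) \<and> inner x y / (norm x * norm y) \<le> 1"
proof (cases "x = 0 \<or> y = 0")
  case False
  then have "0 < norm x * norm y" by simp
  then show ?thesis using Cauchy_Schwarz_ineq2[of x y] by (simp add: divide_simps abs_le_iff)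
qed auto

lemma arccos_le_sing_angle:
  fixes A :: "complex^'n^'n"
  assumes "x \<noteq> 0" "A *v x \<noteq> 0"
  shows "arccos (inner x (A *v x) / (norm x * norm (A *v x))) \<le> sing_angle A"
proof -
  define S where "S = {Re (cinner x (A *v x)) / (norm x * norm (A *v x)) | x. x \<noteq> 0 \<and> A *v x \<noteq> 0}"
  define r where "r = inner x (A *v x) / (norm x * norm (A *v x))"
  have "r \<in> S" unfolding S_def r_def using assms by (auto simp: Re_cinner)
  have S_bounds: "-1 \<le> e \<and> e \<le> 1" if "e \<in> S" for e
  proof -
    from that obtain y where e: "e = inner y (A *v y) / (norm y * norm (A *v y))"
      unfolding S_def by (auto simp: Re_cinner)
    show ?thesis unfolding e by (rule inner_div_norms_bounds)
  qed
  then have "bdd_below S" by (auto simp: bdd_below_def)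
  with \<open>r \<in> S\<close> have "Inf S \<le> r" by (rule cInf_lower)
  moreover have "-1 \<le> Inf S" using \<open>r \<in> S\<close> S_bounds by (intro cInf_greatest) auto
  ultimately have "arccos r \<le> arccos (Inf S)"
    using S_bounds[OF \<open>r \<in> S\<close>] by (intro arccos_le_arccos) auto
  then show ?thesis unfolding sing_angle_def S_def r_def .
qed

lemma angle_sum_lt_pi_imp_det_nonzero:
  fixes A B :: "complex^'n^'n"
  assumes "freq_angle A + freq_angle B < pi" "0 \<le> t"
  shows "det (mat 1 + t *\<^sub>R (B ** A)) \<noteq> 0"
proof
  assume "det (mat 1 + t *\<^sub>R (B ** A)) = 0"
  then obtain v where "v \<noteq> 0" and kernel: "(mat 1 + t *\<^sub>R (B ** A)) *v v = 0"
    by (rule det_eq_0_imp_kernel)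
  define u where "u = A *v v"
  have "v + t *\<^sub>R (B *v u) = 0"
    using kernel by (simp add: u_def matrix_vector_mult_add_rdistrib matrix_vector_mul_assoc
        scaleR_matrix_vector_mult)
  then have Bu: "B *v u = (- 1 / t) *\<^sub>R v" and "t > 0"
    using \<open>v \<noteq> 0\<close> \<open>0 \<le> t\<close> by (auto simp: add_eq_0_iff2 field_simps)
  have "u \<noteq> 0" "B *v u \<noteq> 0" using Bu \<open>v \<noteq> 0\<close> \<open>t > 0\<close> by auto
  then have "A \<noteq> 0" "B \<noteq> 0" unfolding u_def by auto
  define r where "r = inner v u / (norm v * norm u)"
  have "arccos r \<le> freq_angle A"
    using arccos_le_sing_angle[of v A] \<open>v \<noteq> 0\<close> \<open>u \<noteq> 0\<close> \<open>A \<noteq> 0\<close>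
    by (simp add: freq_angle_def r_def u_def)
  moreover have "inner u (B *v u) / (norm u * norm (B *v u)) = - r"
    unfolding Bu r_def using \<open>t > 0\<close> \<open>u \<noteq> 0\<close> \<open>v \<noteq> 0\<close>
    by (simp add: inner_commute field_simps)
  then have "arccos (- r) \<le> freq_angle B"
    using arccos_le_sing_angle[of u B] \<open>u \<noteq> 0\<close> \<open>B *v u \<noteq> 0\<close> \<open>B \<noteq> 0\<close>
    by (simp add: freq_angle_def)
  moreover have "-1 \<le> r \<and> r \<le> 1"
    unfolding r_def by (rule inner_div_norms_bounds)
  then have "arccos (- r) = pi - arccos r" by (simp add: arccos_minus)
  ultimately show False using assms(1) by linarith
qed

section \<open>Zeros of holomorphic families on the right half-plane\<close>

lemma nonzero_near_infinity_uniformly: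
  fixes F :: "'a::metric_space \<Rightarrow> 'b::real_normed_vector \<Rightarrow> 'c::{zero,t2_space}"
  assumes "compact K"
    and lim: "\<And>tt ss t. (\<And>n. tt n \<in> K) \<Longrightarrow> t \<in> K \<Longrightarrow> tt \<longlonglongrightarrow> t \<Longrightarrow>
               filterlim ss at_infinity sequentially \<Longrightarrow> (\<lambda>n. F (tt n) (ss n)) \<longlonglongrightarrow> L t"
    and L_nonzero: "\<And>t. t \<in> K \<Longrightarrow> L t \<noteq> 0"
  obtains R where "\<And>t s. t \<in> K \<Longrightarrow> R < norm s \<Longrightarrow> F t s \<noteq> 0"
proof -
  have "\<exists>R. \<forall>t\<in>K. \<forall>s. R < norm s \<longrightarrow> F t s \<noteq> 0"
  proof (rule ccontr)
    assume "\<not> ?thesis"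
    then have "\<forall>n::nat. \<exists>t s. t \<in> K \<and> real n < norm s \<and> F t s = 0" by blast
    then obtain tt ss where zero: "\<And>n. tt n \<in> K \<and> real n < norm (ss n) \<and> F (tt n) (ss n) = 0"
      by metis
    then obtain t r where "t \<in> K" "strict_mono r" "(tt \<circ> r) \<longlonglongrightarrow> t"
      using compact_imp_seq_compact[OF \<open>compact K\<close>] by (metis seq_compactE)
    have "filterlim (\<lambda>n. ss (r n)) at_infinity sequentially"
      unfolding filterlim_at_infinity_conv_norm_at_top
    proof (rule filterlim_at_top_mono[OF filterlim_real_sequentially], intro always_eventually allI)
      fix n
      have "real n \<le> real (r n)" using seq_suble[OF \<open>strict_mono r\<close>] by simp
      also have "\<dots> \<le> norm (ss (r n))" using zero[of "r n"] by simp
      finally show "real n \<le> norm (ss (r n))" .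
    qed
    with \<open>t \<in> K\<close> \<open>(tt \<circ> r) \<longlonglongrightarrow> t\<close> have "(\<lambda>n. F (tt (r n)) (ss (r n))) \<longlonglongrightarrow> L t"
      using zero by (intro lim) (auto simp: comp_def)
    moreover have "(\<lambda>n. F (tt (r n)) (ss (r n))) = (\<lambda>n. 0)" using zero by auto
    ultimately have "L t = 0" using LIMSEQ_unique tendsto_const by metis
    then show False using L_nonzero \<open>t \<in> K\<close> by blast
  qed
  then show ?thesis using that by blast
qed

lemma uniform_limit_at_convergent_parameter:
  fixes F :: "'a::metric_space \<Rightarrow> 'b::metric_space \<Rightarrow> 'c::metric_space"
  assumes "continuous_on (K \<times> S) (\<lambda>(t, s). F t s)" "compact K" "compact S"
    and "\<And>n. f n \<in> K" "l \<in> K" "f \<longlonglongrightarrow> l"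
  shows "uniform_limit S (\<lambda>n. F (f n)) (F l) sequentially"
  unfolding uniform_limit_iff
proof (intro allI impI)
  fix e :: real
  assume "0 < e"
  have "uniformly_continuous_on (K \<times> S) (\<lambda>(t, s). F t s)"
    using assms(1-3) by (intro compact_uniformly_continuous compact_Times)
  then obtain d where "d > 0" and d: "\<And>x x'. x \<in> K \<times> S \<Longrightarrow> x' \<in> K \<times> S \<Longrightarrow> dist x' x < d \<Longrightarrow>
      dist (case_prod F x') (case_prod F x) < e"
    using \<open>0 < e\<close> unfolding uniformly_continuous_on_def by metis
  from \<open>f \<longlonglongrightarrow> l\<close> \<open>d > 0\<close> have "\<forall>\<^sub>F n in sequentially. dist (f n) l < d" by (rule tendstoD)
  then show "\<forall>\<^sub>F n in sequentially. \<forall>z\<in>S. dist (F (f n) z) (F l z) < e"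
  proof eventually_elim
    case (elim n)
    show ?case
    proof
      fix z
      assume "z \<in> S"
      have "dist (f n, z) (l, z) < d" using elim by (simp add: dist_Pair_Pair)
      then show "dist (F (f n) z) (F l z) < e"
        using d[of "(l, z)" "(f n, z)"] \<open>z \<in> S\<close> assms(4,5) by auto
    qed
  qed
qed

text \<open>Hurwitz's theorem, plus a boundary point where no F t vanishes to exclude the constant
  limit 0.\<close>
lemma closed_zero_free_parameters:
  fixes F :: "real \<Rightarrow> complex \<Rightarrow> complex"
  assumes "compact K" "open U" "open H" "connected H" "H \<subseteq> U"
    and cont: "continuous_on (K \<times> U) (\<lambda>(t, s). F t s)"
    and hol: "\<And>t. t \<in> K \<Longrightarrow> F t holomorphic_on U"
    and "w \<in> U" "w \<in> closure H" and w_nonzero: "\<And>t. t \<in> K \<Longrightarrow> F t w \<noteq> 0"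
  shows "closed {t \<in> K. \<forall>s\<in>H. F t s \<noteq> 0}"
  unfolding closed_sequential_limits
proof (intro allI impI, elim conjE)
  fix f l
  assume f: "\<forall>n. f n \<in> {t \<in> K. \<forall>s\<in>H. F t s \<noteq> 0}" and "f \<longlonglongrightarrow> l"
  then have "l \<in> K"
    using closed_sequentially[OF compact_imp_closed[OF \<open>compact K\<close>]] by blast
  have "F l z \<noteq> 0" if "z \<in> H" for z
  proof (cases "F l constant_on H")
    case True
    then obtain c where c: "\<And>z. z \<in> H \<Longrightarrow> F l z = c" unfolding constant_on_def by blast
    obtain x where "\<And>n. x n \<in> H" "x \<longlonglongrightarrow> w"
      using \<open>w \<in> closure H\<close> unfolding closure_sequential by blast
    moreover have "isCont (F l) w"
      using holomorphic_on_imp_continuous_on[OF hol[OF \<open>l \<in> K\<close>]] \<open>open U\<close> \<open>w \<in> U\<close>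
      by (simp add: continuous_on_eq_continuous_at)
    ultimately have "(\<lambda>n. c) \<longlonglongrightarrow> F l w"
      using c isCont_tendsto_compose[of w "F l" x] by simp
    then have "c = F l w" by (simp add: LIMSEQ_const_iff)
    then show ?thesis using c \<open>z \<in> H\<close> w_nonzero \<open>l \<in> K\<close> by simp
  next
    case False
    have hol_H: "F t holomorphic_on H" if "t \<in> K" for t
      using holomorphic_on_subset[OF hol[OF that] \<open>H \<subseteq> U\<close>] .
    show ?thesis
    proof (rule Hurwitz_no_zeros[of H "\<lambda>n. F (f n)" "F l"])
      show "uniform_limit S (\<lambda>n. F (f n)) (F l) sequentially" if "compact S" "S \<subseteq> H" for S
        using that f \<open>l \<in> K\<close> \<open>f \<longlonglongrightarrow> l\<close> \<open>compact K\<close> \<open>H \<subseteq> U\<close>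
        by (intro uniform_limit_at_convergent_parameter continuous_on_subset[OF cont]) auto
    qed (use assms(3,4) False f that hol_H \<open>l \<in> K\<close> in auto)
  qed
  then show "l \<in> {t \<in> K. \<forall>s\<in>H. F t s \<noteq> 0}" using \<open>l \<in> K\<close> by auto
qed

lemma compact_zeros_if_nonzero_far:
  fixes F :: "'a::euclidean_space \<Rightarrow> 'b::euclidean_space \<Rightarrow> 'c::real_normed_vector"
  assumes "compact K" "closed S" "continuous_on (K \<times> S) (\<lambda>(t, s). F t s)"
    and far: "\<And>t s. t \<in> K \<Longrightarrow> R < norm s \<Longrightarrow> F t s \<noteq> 0"
  shows "compact {x \<in> K \<times> S. case_prod F x = 0}"
proof -
  have "closed {x \<in> K \<times> S. case_prod F x = 0}"
    using assms(1-3) by (intro continuous_closed_preimage_constant closed_Times) (auto intro: compact_imp_closed)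
  moreover have "{x \<in> K \<times> S. case_prod F x = 0} \<subseteq> K \<times> cball 0 R"
  proof safe
    fix t s
    assume "t \<in> K" "F t s = 0"
    then have "\<not> R < norm s" using far by blast
    then show "s \<in> cball 0 R" by simp
  qed
  then have "bounded {x \<in> K \<times> S. case_prod F x = 0}"
    by (rule bounded_subset[rotated]) (simp add: bounded_Times compact_imp_bounded assms(1))
  ultimately show ?thesis by (simp add: compact_eq_bounded_closed)
qed

text \<open>Zeros of F t can neither cross the imaginary axis nor come in from infinity, so the
  parameters t for which F t has no zeros in the open right half-plane form a clopen subset of
  [0, 1].\<close>
lemma zero_free_homotopy_closed_right_half_plane:
  fixes F :: "real \<Rightarrow> complex \<Rightarrow> complex"
  assumes "open U" "{s. 0 \<le> Re s} \<subseteq> U"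
    and cont: "continuous_on ({0..1} \<times> U) (\<lambda>(t, s). F t s)"
    and hol: "\<And>t. t \<in> {0..1} \<Longrightarrow> F t holomorphic_on U"
    and axis: "\<And>t s. t \<in> {0..1} \<Longrightarrow> Re s = 0 \<Longrightarrow> F t s \<noteq> 0"
    and far: "\<And>t s. t \<in> {0..1} \<Longrightarrow> R < norm s \<Longrightarrow> F t s \<noteq> 0"
    and start: "\<And>s. 0 < Re s \<Longrightarrow> F 0 s \<noteq> 0"
    and "0 \<le> Re s"
  shows "F 1 s \<noteq> 0"
proof -
  define K where "K = {0..1::real}"
  define H where "H = {s. 0 < Re s}"
  define Z where "Z = {x \<in> K \<times> {s. 0 \<le> Re s}. case_prod F x = 0}"
  define T where "T = {t \<in> K. \<forall>s\<in>H. F t s \<noteq> 0}"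
  have "compact Z"
    unfolding Z_def K_def using assms(2) far
    by (intro compact_zeros_if_nonzero_far continuous_on_subset[OF cont] closed_halfspace_Re_ge) auto
  then have "closed (fst ` Z)"
    by (intro compact_imp_closed compact_continuous_image continuous_on_fst continuous_on_id)
  moreover have "closed T"
    unfolding T_def
  proof (rule closed_zero_free_parameters[where U = U and w = 0])
    show "0 \<in> closure H"
      unfolding H_def using closure_halfspace_gt[of "1::complex" 0] by simp
  qed (use assms(1,2) cont hol axis in \<open>auto simp: K_def H_def intro: open_halfspace_Re_gt
      convex_connected convex_halfspace_Re_gt\<close>)
  moreover have "t \<in> fst ` Z" if "t \<in> K" "t \<notin> T" for t
  proof -
    obtain s where "s \<in> H" "F t s = 0" using \<open>t \<in> K\<close> \<open>t \<notin> T\<close> by (auto simp: T_def)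
    then have "(t, s) \<in> Z" using \<open>t \<in> K\<close> by (auto simp: Z_def H_def)
    then show ?thesis by force
  qed
  then have "K \<subseteq> T \<union> fst ` Z" by blast
  moreover have "t \<notin> T" if "(t, s) \<in> Z" for t s
  proof -
    from that have "t \<in> K" "0 \<le> Re s" "F t s = 0" by (auto simp: Z_def)
    then have "s \<in> H" using axis[of t s] by (force simp: H_def K_def)
    with \<open>F t s = 0\<close> show ?thesis by (auto simp: T_def)
  qed
  then have "T \<inter> fst ` Z \<inter> K = {}" by force
  ultimately have "T \<inter> K = {} \<or> fst ` Z \<inter> K = {}"
    by (intro connected_closedD) (auto simp: K_def)
  moreover have "0 \<in> T \<inter> K" using start by (simp add: T_def H_def K_def)
  moreover have "1 \<in> K" by (simp add: K_def)
  ultimately have "1 \<in> T" using \<open>K \<subseteq> T \<union> fst ` Z\<close> by blast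
  then show ?thesis
    using axis[of 1 s] \<open>0 \<le> Re s\<close> by (cases "Re s = 0") (auto simp: T_def H_def)
qed

section \<open>Transfer function matrices\<close>

lemma filterlim_imaginary_axis_at_infinity:
  "filterlim (\<lambda>w::real. \<i> * of_real w) at_infinity at_top"
proof -
  have "filterlim (\<lambda>w::real. \<bar>w\<bar>) at_top at_top"
    by (rule filterlim_at_top_mono[OF filterlim_ident]) (auto intro!: always_eventually)
  then show ?thesis by (simp add: filterlim_at_infinity_conv_norm_at_top norm_mult)
qed

lemma real_rational_proper_stableE:
  fixes G :: "complex \<Rightarrow> complex^'n^'n"
  assumes "real_rational_proper_stable G"
  obtains U where "open U" "{s. 0 \<le> Re s} \<subseteq> U" "\<And>i j. (\<lambda>s. G s $ i $ j) holomorphic_on U"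
    "\<And>i j. ((\<lambda>s. G s $ i $ j) \<longlongrightarrow> val_inf G $ i $ j) at_infinity"
proof -
  obtain p q where pq: "\<And>i j. q i j \<noteq> 0 \<and> degree (p i j) \<le> degree (q i j) \<and>
      (\<forall>s. 0 \<le> Re s \<longrightarrow> poly (cpoly (q i j)) s \<noteq> 0) \<and> (\<forall>s. G s $ i $ j = rat_fun (p i j) (q i j) s)"
    using assms unfolding real_rational_proper_stable_def by metis
  have G_eq: "(\<lambda>s. G s $ i $ j) = rat_fun (p i j) (q i j)" for i j
    using pq by auto
  define U where "U = (\<Inter>i. \<Inter>j. {s. poly (cpoly (q i j)) s \<noteq> 0})"
  have "open U"
    unfolding U_def by (intro open_INT ballI open_Collect_neq continuous_intros continuous_on_poly) simp_all
  moreover have "{s. 0 \<le> Re s} \<subseteq> U" unfolding U_def using pq by auto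
  moreover have "(\<lambda>s. G s $ i $ j) holomorphic_on U" for i j
    unfolding G_eq by (rule holomorphic_on_subset[OF rat_fun_holomorphic]) (auto simp: U_def)
  moreover
  define L where "L = (\<chi> i j. complex_of_real (coeff (p i j) (degree (q i j)) / lead_coeff (q i j)))"
  have lim: "((\<lambda>s. G s $ i $ j) \<longlongrightarrow> L $ i $ j) at_infinity" for i j
    unfolding G_eq L_def using rat_fun_tendsto_at_infinity pq by simp
  have "((\<lambda>w::real. G (\<i> * of_real w)) \<longlongrightarrow> L) at_top"
    by (intro vec_tendstoI filterlim_compose[OF lim filterlim_imaginary_axis_at_infinity])
  then have "val_inf G = L" unfolding val_inf_def by (intro tendsto_Lim) auto
  ultimately show ?thesis using that lim by auto
qed

lemma det_mat1_plus_product_nonzero_closed_right_half_plane: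
  fixes P C :: "complex \<Rightarrow> complex^'n^'n"
  assumes "real_rational_proper_stable P" "real_rational_proper_stable C"
    and axis: "\<And>t s. 0 \<le> t \<Longrightarrow> Re s = 0 \<Longrightarrow> det (mat 1 + t *\<^sub>R (C s ** P s)) \<noteq> 0"
    and infinity: "\<And>t. 0 \<le> t \<Longrightarrow> det (mat 1 + t *\<^sub>R (val_inf C ** val_inf P)) \<noteq> 0"
    and "0 \<le> Re s"
  shows "det (mat 1 + C s ** P s) \<noteq> 0"
proof -
  obtain UP where UP: "open UP" "{s. 0 \<le> Re s} \<subseteq> UP" "\<And>i j. (\<lambda>s. P s $ i $ j) holomorphic_on UP"
      and lim_P: "\<And>i j. ((\<lambda>s. P s $ i $ j) \<longlongrightarrow> val_inf P $ i $ j) at_infinity"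
    by (rule real_rational_proper_stableE[OF assms(1)]) blast
  obtain UC where UC: "open UC" "{s. 0 \<le> Re s} \<subseteq> UC" "\<And>i j. (\<lambda>s. C s $ i $ j) holomorphic_on UC"
      and lim_C: "\<And>i j. ((\<lambda>s. C s $ i $ j) \<longlongrightarrow> val_inf C $ i $ j) at_infinity"
    by (rule real_rational_proper_stableE[OF assms(2)]) blast
  define U where "U = UP \<inter> UC"
  define F where "F t s = det (mat 1 + t *\<^sub>R (C s ** P s))" for t s
  have hol_P: "(\<lambda>s. P s $ i $ j) holomorphic_on U" for i j
    unfolding U_def by (rule holomorphic_on_subset[OF UP(3)]) auto
  have hol_C: "(\<lambda>s. C s $ i $ j) holomorphic_on U" for i j
    unfolding U_def by (rule holomorphic_on_subset[OF UC(3)]) auto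
  have hol: "F t holomorphic_on U" for t
    unfolding F_def
    by (intro holomorphic_on_det, unfold mat1_plus_scaled_product_entry) (intro holomorphic_intros hol_P hol_C)
  have cont: "continuous_on ({0..1} \<times> U) (\<lambda>(t, s). F t s)"
    unfolding F_def using hol_P hol_C
    by (intro continuous_on_det_mat1_plus_scaled_product holomorphic_on_imp_continuous_on)
  obtain R where far: "\<And>t s. t \<in> {0..1} \<Longrightarrow> R < norm s \<Longrightarrow> F t s \<noteq> 0"
  proof (rule nonzero_near_infinity_uniformly[where K = "{0..1}" and F = F
        and L = "\<lambda>t. det (mat 1 + t *\<^sub>R (val_inf C ** val_inf P))"])
    show "(\<lambda>n. F (tt n) (ss n)) \<longlonglongrightarrow> det (mat 1 + t *\<^sub>R (val_inf C ** val_inf P))"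
      if "tt \<longlonglongrightarrow> t" "filterlim ss at_infinity sequentially" for tt ss t
      unfolding F_def using that lim_P lim_C by (rule tendsto_det_mat1_plus_scaled_product)
  qed (use infinity that in auto)
  have "F 1 s \<noteq> 0"
  proof (rule zero_free_homotopy_closed_right_half_plane[where F = F and U = U and R = R])
    show "{s. 0 \<le> Re s} \<subseteq> U" using UP(2) UC(2) by (auto simp: U_def)
    show "F 0 s \<noteq> 0" for s by (simp add: F_def)
  qed (use UP(1) UC(1) cont hol axis far \<open>0 \<le> Re s\<close> in \<open>auto simp: U_def F_def\<close>)
  then show ?thesis by (simp add: F_def)
qed

lemma real_rational_proper_lowest_terms:
  fixes M :: "complex \<Rightarrow> complex^'n^'n"
  assumes "real_rational_proper M"
  obtains p q where "\<And>i j. q i j \<noteq> 0" "\<And>i j. degree (p i j) \<le> degree (q i j)"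
    "\<And>i j s. poly (cpoly (q i j)) s = 0 \<Longrightarrow> poly (cpoly (p i j)) s \<noteq> 0"
    "finite {s. M s \<noteq> (\<chi> i j. rat_fun (p i j) (q i j) s)}"
proof -
  obtain p q where pq: "\<And>i j. q i j \<noteq> 0 \<and> degree (p i j) \<le> degree (q i j) \<and>
      (\<forall>s. M s $ i $ j = rat_fun (p i j) (q i j) s)"
    using assms unfolding real_rational_proper_def by metis
  have "\<exists>p' q'. q' \<noteq> 0 \<and> degree p' \<le> degree q' \<and>
      (\<forall>s. poly (cpoly q') s = 0 \<longrightarrow> poly (cpoly p') s \<noteq> 0) \<and>
      (\<forall>s. poly (cpoly (q i j)) s \<noteq> 0 \<longrightarrow> rat_fun p' q' s = M s $ i $ j)" for i j
  proof -
    obtain a b where "b \<noteq> 0" "degree a \<le> degree b" "\<And>s. poly (cpoly b) s = 0 \<Longrightarrow> poly (cpoly a) s \<noteq> 0"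
        "\<And>s. poly (cpoly (q i j)) s \<noteq> 0 \<Longrightarrow> rat_fun a b s = rat_fun (p i j) (q i j) s"
      by (rule rat_fun_lowest_terms[of "q i j" "p i j"]) (use pq[of i j] in blast)+
    then show ?thesis using pq[of i j] by (intro exI[of _ a] exI[of _ b]) auto
  qed
  then obtain p' q' where reduced: "\<And>i j. q' i j \<noteq> 0 \<and> degree (p' i j) \<le> degree (q' i j) \<and>
      (\<forall>s. poly (cpoly (q' i j)) s = 0 \<longrightarrow> poly (cpoly (p' i j)) s \<noteq> 0) \<and>
      (\<forall>s. poly (cpoly (q i j)) s \<noteq> 0 \<longrightarrow> rat_fun (p' i j) (q' i j) s = M s $ i $ j)"
    by metis
  have "M s = (\<chi> i j. rat_fun (p' i j) (q' i j) s)" if "\<forall>i j. poly (cpoly (q i j)) s \<noteq> 0" for s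
    using reduced that by (simp add: vec_eq_iff)
  then have "{s. M s \<noteq> (\<chi> i j. rat_fun (p' i j) (q' i j) s)} \<subseteq> (\<Union>i. \<Union>j. {s. poly (cpoly (q i j)) s = 0})"
    by blast
  moreover have "finite (\<Union>i. \<Union>j. {s. poly (cpoly (q i j)) s = 0})"
    using pq by (intro finite_UN_I finite_UNIV poly_roots_finite) (auto simp: cpoly_eq_0_iff)
  ultimately have "finite {s. M s \<noteq> (\<chi> i j. rat_fun (p' i j) (q' i j) s)}"
    by (rule finite_subset)
  show ?thesis
  proof (rule that[where p = p' and q = q'])
    show "q' i j \<noteq> 0" "degree (p' i j) \<le> degree (q' i j)" for i j
      using reduced by blast+
    show "poly (cpoly (p' i j)) s \<noteq> 0" if "poly (cpoly (q' i j)) s = 0" for i j s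
      using reduced that by blast
  qed fact
qed

lemma is_inverse_IpCP_eq_off_finite:
  assumes "is_inverse_IpCP M P C" "finite {s. M s \<noteq> M' s}"
  shows "is_inverse_IpCP M' P C"
proof -
  have "{s. M' s ** (mat 1 + C s ** P s) \<noteq> mat 1}
          \<subseteq> {s. M s ** (mat 1 + C s ** P s) \<noteq> mat 1} \<union> {s. M s \<noteq> M' s}"
    by auto
  then show ?thesis
    using assms unfolding is_inverse_IpCP_def by (auto intro: finite_subset)
qed

lemma isCont_eq_if_eq_off_finite:
  fixes f g :: "'a::{t2_space,perfect_space} \<Rightarrow> 'b::t2_space"
  assumes "isCont f z" "isCont g z" "finite A" "\<And>s. s \<notin> A \<Longrightarrow> f s = g s"
  shows "f z = g z"
proof -
  have "\<forall>\<^sub>F s in at z. s \<notin> A"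
    using \<open>finite A\<close> islimpt_finite islimpt_iff_eventually by blast
  then have "\<forall>\<^sub>F s in at z. f s = g s" by eventually_elim (rule assms(4))
  with assms(1) have "(g \<longlongrightarrow> f z) (at z)"
    unfolding isCont_def by (rule Lim_transform_eventually)
  moreover have "(g \<longlongrightarrow> g z) (at z)" using assms(2) by (simp add: isCont_def)
  ultimately show ?thesis by (rule tendsto_unique[OF at_neq_bot])
qed

lemma inverse_entry_denominator_nonzero:
  fixes X N :: "complex \<Rightarrow> complex^'n^'n"
  assumes "open U" "s0 \<in> U" "\<And>a b. continuous_on U (\<lambda>s. X s $ a $ b)" "det (X s0) \<noteq> 0"
    and "finite {s. N s ** X s \<noteq> mat 1}"
    and "q \<noteq> 0" "\<And>s. N s $ k $ j = rat_fun p q s"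
    and coprime: "\<And>s. poly (cpoly q) s = 0 \<Longrightarrow> poly (cpoly p) s \<noteq> 0"
  shows "poly (cpoly q) s0 \<noteq> 0"
proof
  assume q0: "poly (cpoly q) s0 = 0"
  define D where "D s = det (\<chi> a b. if b = k then (if a = j then 1 else 0) else X s $ a $ b)" for s
  define E where "E = {s. N s ** X s \<noteq> mat 1} \<union> {s. poly (cpoly q) s = 0}"
  have "isCont (\<lambda>s. poly (cpoly p) s * det (X s)) s0" "isCont (\<lambda>s. poly (cpoly q) s * D s) s0"
  proof -
    have "continuous_on U (\<lambda>s. poly (cpoly p) s * det (X s))"
      by (intro continuous_intros continuous_on_poly continuous_on_det assms(3))
    moreover have "continuous_on U (\<lambda>s. (\<chi> a b. if b = k then (if a = j then 1 else 0) else X s $ a $ b) $ a $ b)"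
      for a b by (cases "b = k") (simp_all add: assms(3))
    then have "continuous_on U D" unfolding D_def by (rule continuous_on_det)
    then have "continuous_on U (\<lambda>s. poly (cpoly q) s * D s)"
      by (intro continuous_intros continuous_on_poly)
    ultimately show "isCont (\<lambda>s. poly (cpoly p) s * det (X s)) s0" "isCont (\<lambda>s. poly (cpoly q) s * D s) s0"
      using assms(1,2) by (simp_all add: continuous_on_eq_continuous_at)
  qed
  moreover have "finite E"
    unfolding E_def using assms(5,6) by (simp add: poly_roots_finite cpoly_eq_0_iff)
  moreover have "poly (cpoly p) s * det (X s) = poly (cpoly q) s * D s" if "s \<notin> E" for s
  proof -
    from that have "N s ** X s = mat 1" "poly (cpoly q) s \<noteq> 0" by (auto simp: E_def)
    then show ?thesis
      using left_inverse_entry_mult_det[of "N s" "X s" k j] assms(7)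
      by (simp add: D_def rat_fun_def field_simps)
  qed
  ultimately have "poly (cpoly p) s0 * det (X s0) = poly (cpoly q) s0 * D s0"
    by (rule isCont_eq_if_eq_off_finite)
  then show False using q0 coprime[OF q0] assms(4) by simp
qed

lemma feedback_stable_if_det_nonzero:
  fixes P C :: "complex \<Rightarrow> complex^'n^'n"
  assumes "real_rational_proper_stable P" "real_rational_proper_stable C" "well_posed P C"
    and det_nonzero: "\<And>s. 0 \<le> Re s \<Longrightarrow> det (mat 1 + C s ** P s) \<noteq> 0"
  shows "feedback_stable P C"
proof -
  obtain M where "real_rational_proper M" and M_inverse: "is_inverse_IpCP M P C"
    using assms(3) unfolding well_posed_def by blast
  obtain p q where pq: "\<And>i j. q i j \<noteq> 0" "\<And>i j. degree (p i j) \<le> degree (q i j)"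
      and coprime: "\<And>i j s. poly (cpoly (q i j)) s = 0 \<Longrightarrow> poly (cpoly (p i j)) s \<noteq> 0"
      and "finite {s. M s \<noteq> (\<chi> i j. rat_fun (p i j) (q i j) s)}"
    by (rule real_rational_proper_lowest_terms[OF \<open>real_rational_proper M\<close>]) blast
  define M' where "M' s = (\<chi> i j. rat_fun (p i j) (q i j) s)" for s
  have M'_inverse: "is_inverse_IpCP M' P C"
    using M_inverse \<open>finite _\<close> unfolding M'_def[abs_def] by (rule is_inverse_IpCP_eq_off_finite)
  obtain UP where UP: "open UP" "{s. 0 \<le> Re s} \<subseteq> UP" "\<And>i j. (\<lambda>s. P s $ i $ j) holomorphic_on UP"
    by (rule real_rational_proper_stableE[OF assms(1)]) blast
  obtain UC where UC: "open UC" "{s. 0 \<le> Re s} \<subseteq> UC" "\<And>i j. (\<lambda>s. C s $ i $ j) holomorphic_on UC"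
    by (rule real_rational_proper_stableE[OF assms(2)]) blast
  have cont_P: "continuous_on (UP \<inter> UC) (\<lambda>s. P s $ i $ j)" for i j
    by (rule holomorphic_on_imp_continuous_on[OF holomorphic_on_subset[OF UP(3)]]) auto
  have cont_C: "continuous_on (UP \<inter> UC) (\<lambda>s. C s $ i $ j)" for i j
    by (rule holomorphic_on_imp_continuous_on[OF holomorphic_on_subset[OF UC(3)]]) auto
  have cont_X: "continuous_on (UP \<inter> UC) (\<lambda>s. (mat 1 + C s ** P s) $ i $ j)" for i j
    unfolding mat1_plus_product_entry by (intro cont_P cont_C continuous_intros)
  have denominator_nonzero: "poly (cpoly (q i j)) s \<noteq> 0" if "0 \<le> Re s" for i j s
  proof (rule inverse_entry_denominator_nonzero)
    show "open (UP \<inter> UC)" "s \<in> UP \<inter> UC" using UP(1,2) UC(1,2) that by auto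
    show "det (mat 1 + C s ** P s) \<noteq> 0" using det_nonzero[OF that] .
    show "finite {s. M' s ** (mat 1 + C s ** P s) \<noteq> mat 1}"
      using M'_inverse by (simp add: is_inverse_IpCP_def)
    show "M' s $ i $ j = rat_fun (p i j) (q i j) s" for s by (simp add: M'_def)
  qed (use pq coprime cont_X in blast)+
  have "real_rational_proper_stable M'"
    unfolding real_rational_proper_stable_def
  proof (intro allI)
    fix i j
    show "\<exists>p q. q \<noteq> 0 \<and> degree p \<le> degree q \<and> (\<forall>s. 0 \<le> Re s \<longrightarrow> poly (cpoly q) s \<noteq> 0) \<and>
        (\<forall>s. M' s $ i $ j = rat_fun p q s)"
      using pq denominator_nonzero by (intro exI[of _ "p i j"] exI[of _ "q i j"]) (simp add: M'_def)
  qed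
  with M'_inverse show ?thesis unfolding feedback_stable_def by blast
qed

theorem theorem3:
  fixes P C :: "complex \<Rightarrow> complex^'n^'n"
  assumes "real_rational_proper_stable P"
    and "real_rational_proper_stable C"
    and "well_posed P C"
    and "\<forall>w::real. freq_angle (P (\<i> * of_real w)) + freq_angle (C (\<i> * of_real w)) < pi"
    and "freq_angle (val_inf P) + freq_angle (val_inf C) < pi"
    and "freq_angle (val_minf P) + freq_angle (val_minf C) < pi"
  shows "feedback_stable P C"
proof (rule feedback_stable_if_det_nonzero[OF assms(1-3)])
  have axis: "det (mat 1 + t *\<^sub>R (C s ** P s)) \<noteq> 0" if "0 \<le> t" "Re s = 0" for t s
  proof -
    have "s = \<i> * of_real (Im s)" using \<open>Re s = 0\<close> by (simp add: complex_eq_iff)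
    then have "freq_angle (P s) + freq_angle (C s) < pi" using assms(4) by metis
    then show ?thesis using \<open>0 \<le> t\<close> by (rule angle_sum_lt_pi_imp_det_nonzero)
  qed
  show "det (mat 1 + C s ** P s) \<noteq> 0" if "0 \<le> Re s" for s
    using det_mat1_plus_product_nonzero_closed_right_half_plane[OF assms(1,2) axis
        angle_sum_lt_pi_imp_det_nonzero[OF assms(5)] that] .
qed

end
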